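(* Let $Y\in\mathbb R^n$. For $t\ge0$ let $M(t)\in\mathbb R^{n\times n}$ be symmetric positive semidefinite with continuously differentiable orthonormal eigenvectors $v_1(t),\dots,v_n(t)$ and eigenvalues $\lambda_i(t)$, i.e. $M(t)v_i(t)=\lambda_i(t)v_i(t)$. Let $D(t)$ solve $\frac{dD}{dt}=-M(t)D(t)$ with $D(0)=-Y$, and set $F(t)=D(t)+Y$. Assume $D(0)^\top v_i(0)>0$ for all $i$, and that for all $t\ge0$ and all $i$, $$F(t)^\top\frac{dv_i(t)}{dt}<\lambda_i(t)\,D(t)^\top v_i(t).$$ Let $t_1=\inf\{t\ge0:\ D(t)^\top v_i(t)\le0\text{ for some }i\}$. Then $D(t)^\top F(t)<0$ for all $0<t<t_1$.
   Context: Here $D$ plays the role of the residual vector and $F$ of the network output vector under gradient flow. *)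

theory Defs
  imports "HOL-Analysis.Analysis"
begin

end

theory Submission
  imports Defs
begin

text \<open>In the orthonormal eigenbasis, \<open>D \<bullet> F = (\<Sum>i. (D \<bullet> v\<^sub>i) (F \<bullet> v\<^sub>i))\<close>. Before \<open>t\<^sub>1\<close> every
  factor \<open>D \<bullet> v\<^sub>i\<close> is positive, so it suffices that every \<open>F \<bullet> v\<^sub>i\<close> is negative. Since
  \<open>F' = D' = -M D\<close> and \<open>M\<close> is symmetric with \<open>M v\<^sub>i = \<lambda>\<^sub>i v\<^sub>i\<close>, the derivative of \<open>F \<bullet> v\<^sub>i\<close> is
  \<open>F \<bullet> v\<^sub>i' - \<lambda>\<^sub>i (D \<bullet> v\<^sub>i)\<close>, negative by hypothesis; as \<open>F(0) = 0\<close>, \<open>F \<bullet> v\<^sub>i < 0\<close> for \<open>t > 0\<close>.\<close>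

lemma inner_eq_sum_orthonormal:
  fixes w :: "'n \<Rightarrow> real ^ 'n"
  assumes orthonormal: "\<And>i j. w i \<bullet> w j = (if i = j then 1 else 0)"
  shows "x \<bullet> y = (\<Sum>i\<in>UNIV. (x \<bullet> w i) * (y \<bullet> w i))"
proof -
  define W :: "real ^ 'n ^ 'n" where "W = (\<chi> i. w i)"
  have "W ** transpose W = mat 1"
    using orthonormal
    by (simp add: vec_eq_iff W_def matrix_matrix_mult_def transpose_def mat_def inner_vec_def)
  then have WtW: "transpose W ** W = mat 1"
    using matrix_left_right_inverse by blast
  have "x \<bullet> y = x \<bullet> (transpose W *v (W *v y))"
    by (simp add: matrix_vector_mul_assoc WtW)
  also have "\<dots> = (W *v x) \<bullet> (W *v y)"
    by (metis dot_lmul_matrix vector_transpose_matrix)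
  also have "\<dots> = (\<Sum>i\<in>UNIV. (x \<bullet> w i) * (y \<bullet> w i))"
    by (simp add: inner_vec_def matrix_vector_mult_def W_def mult.commute)
  finally show ?thesis .
qed

lemma symmetric_matrix_inner_eigenvector:
  fixes A :: "real ^ 'n ^ 'n"
  assumes "transpose A = A" and "A *v w = c *\<^sub>R w"
  shows "(A *v x) \<bullet> w = c * (x \<bullet> w)"
proof -
  have "(A *v x) \<bullet> w = x \<bullet> (transpose A *v w)"
    by (metis dot_lmul_matrix inner_commute transpose_matrix_vector)
  then show ?thesis
    using assms by simp
qed

lemma inner_eigenvector_has_derivative:
  fixes A :: "real ^ 'n ^ 'n" and F w :: "real \<Rightarrow> real ^ 'n"
  assumes F_deriv: "(F has_vector_derivative - (A *v d)) (at s within S)"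
    and w_deriv: "(w has_vector_derivative w') (at s within S)"
    and "transpose A = A" and "A *v w s = c *\<^sub>R w s"
  shows "((\<lambda>s. F s \<bullet> w s) has_real_derivative F s \<bullet> w' - c * (d \<bullet> w s)) (at s within S)"
proof -
  have inner_deriv: "((\<lambda>s. F s \<bullet> w s) has_derivative
      (\<lambda>h. F s \<bullet> (h *\<^sub>R w') + (h *\<^sub>R - (A *v d)) \<bullet> w s)) (at s within S)"
    using has_derivative_inner[OF F_deriv[unfolded has_vector_derivative_def]
        w_deriv[unfolded has_vector_derivative_def]] .
  have eigen_term: "(A *v d) \<bullet> w s = c * (d \<bullet> w s)"
    using symmetric_matrix_inner_eigenvector assms(3,4) by blast
  show ?thesis
    unfolding has_field_derivative_def
    by (rule has_derivative_eq_rhs[OF inner_deriv])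
      (simp add: eigen_term fun_eq_iff algebra_simps inner_minus_left)
qed

lemma DERIV_within_neg_imp_decreasing:
  fixes g g' :: "real \<Rightarrow> real"
  assumes "a < b"
    and deriv: "\<And>s. a \<le> s \<Longrightarrow> (g has_real_derivative g' s) (at s within {a..})"
    and neg: "\<And>s. a < s \<Longrightarrow> s < b \<Longrightarrow> g' s < 0"
  shows "g b < g a"
proof (rule DERIV_neg_imp_decreasing_open[OF \<open>a < b\<close>])
  fix s assume "a < s" "s < b"
  have "(g has_real_derivative g' s) (at s within {a<..})"
    by (rule has_field_derivative_subset[OF deriv]) (use \<open>a < s\<close> in auto)
  then have "(g has_real_derivative g' s) (at s)"
    using \<open>a < s\<close> at_within_open[of s "{a<..}"] by simp
  then show "\<exists>y. (g has_real_derivative y) (at s) \<and> y < 0"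
    using neg \<open>a < s\<close> \<open>s < b\<close> by blast
next
  show "continuous_on {a..b} g"
  proof (rule DERIV_continuous_on)
    fix s assume s: "s \<in> {a..b}"
    show "(g has_real_derivative g' s) (at s within {a..b})"
      by (rule has_field_derivative_subset[OF deriv]) (use s in auto)
  qed
qed

lemma ereal_less_Inf_image_imp_notin:
  assumes "ereal t < Inf (ereal ` S)"
  shows "t \<notin> S"
  using assms Inf_lower[of "ereal t" "ereal ` S"] by (auto simp: not_le)

theorem mainTheorem10:
  fixes Y :: "real ^ 'n"
    and M :: "real \<Rightarrow> real ^ 'n ^ 'n"
    and v v' :: "'n \<Rightarrow> real \<Rightarrow> real ^ 'n"
    and lam :: "'n \<Rightarrow> real \<Rightarrow> real"
    and D F :: "real \<Rightarrow> real ^ 'n"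
  assumes symM: "\<And>t. t \<ge> 0 \<Longrightarrow> transpose (M t) = M t"
    and psdM: "\<And>t x. t \<ge> 0 \<Longrightarrow> 0 \<le> x \<bullet> (M t *v x)"
    and v_deriv: "\<And>i t. t \<ge> 0 \<Longrightarrow> (v i has_vector_derivative v' i t) (at t within {0..})"
    and v'_cont: "\<And>i. continuous_on {0..} (v' i)"
    and orthonormal: "\<And>i j t. t \<ge> 0 \<Longrightarrow> v i t \<bullet> v j t = (if i = j then 1 else 0)"
    and eigen: "\<And>i t. t \<ge> 0 \<Longrightarrow> M t *v v i t = lam i t *\<^sub>R v i t"
    and D_ode: "\<And>t. t \<ge> 0 \<Longrightarrow> (D has_vector_derivative (- (M t *v D t))) (at t within {0..})"
    and D0: "D 0 = - Y"
    and F_def: "\<And>t. F t = D t + Y"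
    and init_pos: "\<And>i. D 0 \<bullet> v i 0 > 0"
    and cond: "\<And>i t. t \<ge> 0 \<Longrightarrow> F t \<bullet> v' i t < lam i t * (D t \<bullet> v i t)"
  shows "\<forall>t. 0 < t \<and> ereal t < Inf (ereal ` {s. s \<ge> 0 \<and> (\<exists>i. D s \<bullet> v i s \<le> 0)})
           \<longrightarrow> D t \<bullet> F t < 0"
proof (intro allI impI)
  fix t assume t: "0 < t \<and> ereal t < Inf (ereal ` {s. s \<ge> 0 \<and> (\<exists>i. D s \<bullet> v i s \<le> 0)})"
  have D_pos: "D t \<bullet> v i t > 0" for i
    using ereal_less_Inf_image_imp_notin[OF conjunct2[OF t]] conjunct1[OF t] by (auto simp: not_le)
  have F_deriv: "(F has_vector_derivative - (M s *v D s)) (at s within {0..})" if "s \<ge> 0" for s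
    using D_ode[OF that] has_vector_derivative_add_const unfolding F_def[abs_def] by blast
  have F_neg: "F t \<bullet> v i t < 0" for i
  proof -
    have "F t \<bullet> v i t < F 0 \<bullet> v i 0"
      by (rule DERIV_within_neg_imp_decreasing[where a = 0, OF _
            inner_eigenvector_has_derivative[OF F_deriv v_deriv symM eigen]])
        (use t cond in auto)
    then show ?thesis
      using D0 F_def[of 0] by simp
  qed
  have "D t \<bullet> F t = (\<Sum>i\<in>UNIV. (D t \<bullet> v i t) * (F t \<bullet> v i t))"
    using orthonormal t by (intro inner_eq_sum_orthonormal) auto
  also have "\<dots> < (\<Sum>i\<in>(UNIV :: 'n set). 0)"
    by (rule sum_strict_mono) (use D_pos F_neg in \<open>auto simp: mult_pos_neg\<close>)
  also have "\<dots> = 0"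
    by simp
  finally show "D t \<bullet> F t < 0" .
qed

end
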